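(* Let $\tilde f:[-\pi,\pi]\times[-1,1]\to\mathbb{C}$ be a BMC function (defined below). Fix $(\theta^*,\rho^* )\in[0,\pi]\times[0,1]$ and let $$M=\begin{bmatrix}\tilde f(\theta^*-\pi,\rho^* ) & \tilde f(\theta^*,\rho^* )\\ \tilde f(\theta^*-\pi,-\rho^* ) & \tilde f(\theta^*,-\rho^* )\end{bmatrix},$$ and assume $M$ is invertible. Define $\tilde s:[-\pi,\pi]\times[-1,1]\to\mathbb{C}$ by $$\tilde s(\theta,\rho)=\begin{bmatrix}\tilde f(\theta^*-\pi,\rho) & \tilde f(\theta^*,\rho)\end{bmatrix} M^{-1}\begin{bmatrix}\tilde f(\theta,\rho^* )\\ \tilde f(\theta,-\rho^* )\end{bmatrix}.$$ Then $\tilde s$ is also a BMC function. Consequently, the update $\tilde f\leftarrow \tilde f-\tilde s$ (a structure-preserving Gaussian elimination step with $2\times 2$ pivot $M$) maps BMC functions to BMC functions.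
   Context: A function $\tilde f:[-\pi,\pi]\times[-1,1]\to\mathbb{C}$ is called a BMC (block-mirror centrosymmetric) function if there are functions $g,h:[0,\pi]\times[0,1]\to\mathbb{C}$ such that $\tilde f(\theta,\rho)=g(\theta+\pi,\rho)$ for $(\theta,\rho)\in[-\pi,0]\times[0,1]$; $\tilde f(\theta,\rho)=h(\theta,\rho)$ for $(\theta,\rho)\in[0,\pi]\times[0,1]$; $\tilde f(\theta,\rho)=g(\theta,-\rho)$ for $(\theta,\rho)\in[0,\pi]\times[-1,0]$; $\tilde f(\theta,\rho)=h(\theta+\pi,-\rho)$ for $(\theta,\rho)\in[-\pi,0]\times[-1,0]$. Equivalently, $\tilde f(\theta,\rho)=\tilde f(\theta+\pi,-\rho)$ for all $(\theta,\rho)\in[-\pi,0]\times[-1,1]$. *)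

theory Defs
  imports "HOL-Analysis.Analysis"
begin

text \<open>Functions on [-pi,pi] x [-1,1] are modelled as total functions real => real => complex;
  only their values on the rectangle matter.  BMC is defined exactly as in the paper.\<close>

definition BMC :: "(real \<Rightarrow> real \<Rightarrow> complex) \<Rightarrow> bool" where
  "BMC f \<longleftrightarrow> (\<exists>g h :: real \<Rightarrow> real \<Rightarrow> complex.
     (\<forall>\<theta> \<rho>. \<theta> \<in> {-pi..0} \<and> \<rho> \<in> {0..1} \<longrightarrow> f \<theta> \<rho> = g (\<theta> + pi) \<rho>) \<and>
     (\<forall>\<theta> \<rho>. \<theta> \<in> {0..pi} \<and> \<rho> \<in> {0..1} \<longrightarrow> f \<theta> \<rho> = h \<theta> \<rho>) \<and>
     (\<forall>\<theta> \<rho>. \<theta> \<in> {0..pi} \<and> \<rho> \<in> {-1..0} \<longrightarrow> f \<theta> \<rho> = g \<theta> (-\<rho>)) \<and>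
     (\<forall>\<theta> \<rho>. \<theta> \<in> {-pi..0} \<and> \<rho> \<in> {-1..0} \<longrightarrow> f \<theta> \<rho> = h (\<theta> + pi) (-\<rho>)))"

definition pivot_matrix :: "(real \<Rightarrow> real \<Rightarrow> complex) \<Rightarrow> real \<Rightarrow> real \<Rightarrow> complex^2^2" where
  "pivot_matrix f ts rs =
     vector [vector [f (ts - pi) rs, f ts rs], vector [f (ts - pi) (-rs), f ts (-rs)]]"

definition schur_update :: "(real \<Rightarrow> real \<Rightarrow> complex) \<Rightarrow> real \<Rightarrow> real \<Rightarrow> real \<Rightarrow> real \<Rightarrow> complex" where
  "schur_update f ts rs \<theta> \<rho> =
     (let r = (vector [f (ts - pi) \<rho>, f ts \<rho>] :: complex^2);
          c = (vector [f \<theta> rs, f \<theta> (-rs)] :: complex^2);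
          w = r v* matrix_inv (pivot_matrix f ts rs)
      in \<Sum>i\<in>UNIV. w $ i * c $ i)"

end

theory Submission
  imports Defs
begin

text \<open>Via the pointwise characterisation BMC f \<longleftrightarrow> f \<theta> \<rho> = f (\<theta> + \<pi>) (-\<rho>),
  the BMC property of f says that the row vector r(\<rho>) = [f(\<theta>*-\<pi>,\<rho>), f(\<theta>*,\<rho>)] and the
  column vector c(\<theta>) = [f(\<theta>,\<rho>*), f(\<theta>,-\<rho>*)] are reversed by the reflections, i.e.
  r(-\<rho>) = r(\<rho>) J and c(\<theta>+\<pi>) = J c(\<theta>) for the 2x2 exchange matrix J. In particular the
  pivot M is centrosymmetric, M J = J M, hence so is M^-1, and then
  s(\<theta>+\<pi>,-\<rho>) = r J M^-1 J c = r M^-1 c = s(\<theta>,\<rho>).\<close>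

lemma BMC_iff:
  "BMC f \<longleftrightarrow> (\<forall>\<theta> \<rho>. \<theta> \<in> {-pi..0} \<and> \<rho> \<in> {-1..1} \<longrightarrow> f \<theta> \<rho> = f (\<theta> + pi) (-\<rho>))"
proof
  assume "BMC f"
  then obtain g h where
      g1: "\<forall>\<theta> \<rho>. \<theta> \<in> {-pi..0} \<and> \<rho> \<in> {0..1} \<longrightarrow> f \<theta> \<rho> = g (\<theta> + pi) \<rho>"
    and h2: "\<forall>\<theta> \<rho>. \<theta> \<in> {0..pi} \<and> \<rho> \<in> {0..1} \<longrightarrow> f \<theta> \<rho> = h \<theta> \<rho>"
    and g3: "\<forall>\<theta> \<rho>. \<theta> \<in> {0..pi} \<and> \<rho> \<in> {-1..0} \<longrightarrow> f \<theta> \<rho> = g \<theta> (-\<rho>)"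
    and h4: "\<forall>\<theta> \<rho>. \<theta> \<in> {-pi..0} \<and> \<rho> \<in> {-1..0} \<longrightarrow> f \<theta> \<rho> = h (\<theta> + pi) (-\<rho>)"
    unfolding BMC_def by blast
  show "\<forall>\<theta> \<rho>. \<theta> \<in> {-pi..0} \<and> \<rho> \<in> {-1..1} \<longrightarrow> f \<theta> \<rho> = f (\<theta> + pi) (-\<rho>)"
  proof (intro allI impI)
    fix \<theta> \<rho> :: real
    assume "\<theta> \<in> {-pi..0} \<and> \<rho> \<in> {-1..1}"
    then show "f \<theta> \<rho> = f (\<theta> + pi) (-\<rho>)"
      using g1[rule_format, of \<theta> \<rho>] g3[rule_format, of "\<theta> + pi" "-\<rho>"]
        h4[rule_format, of \<theta> \<rho>] h2[rule_format, of "\<theta> + pi" "-\<rho>"]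
      by (cases "\<rho> \<ge> 0") auto
  qed
next
  assume "\<forall>\<theta> \<rho>. \<theta> \<in> {-pi..0} \<and> \<rho> \<in> {-1..1} \<longrightarrow> f \<theta> \<rho> = f (\<theta> + pi) (-\<rho>)"
  then show "BMC f"
    unfolding BMC_def by (intro exI[of _ "\<lambda>\<theta> \<rho>. f \<theta> (-\<rho>)"] exI[of _ f]) auto
qed

lemma BMC_diff:
  assumes "BMC f" and "BMC g"
  shows "BMC (\<lambda>\<theta> \<rho>. f \<theta> \<rho> - g \<theta> \<rho>)"
  using assms by (simp add: BMC_iff)

lemma matrix_inv_both_sides:
  fixes A :: "'a::semiring_1^'n^'m"
  assumes "invertible A"
  shows "A ** matrix_inv A = mat 1" and "matrix_inv A ** A = mat 1"
  using someI_ex[OF assms[unfolded invertible_def]] by (simp_all add: matrix_inv_def)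

lemma matrix_inv_commute:
  fixes A P :: "'a::semiring_1^'n^'n"
  assumes "invertible A" and "A ** P = P ** A"
  shows "matrix_inv A ** P = P ** matrix_inv A"
proof -
  let ?B = "matrix_inv A"
  have "?B ** P = ?B ** (P ** A) ** ?B"
    by (metis matrix_inv_both_sides(1)[OF assms(1)] matrix_mul_assoc matrix_mul_rid)
  also have "\<dots> = (?B ** A) ** P ** ?B"
    by (simp add: assms(2) flip: matrix_mul_assoc)
  finally show ?thesis
    by (simp add: matrix_inv_both_sides(2)[OF assms(1)])
qed

lemma sum_vector_matrix_mult_transpose:
  fixes x :: "'a::comm_semiring_1^'m" and A :: "'a^'n^'m" and y :: "'a^'n"
  shows "(\<Sum>i\<in>UNIV. (x v* A) $ i * y $ i) = (\<Sum>j\<in>UNIV. x $ j * (A *v y) $ j)"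
  by (simp add: vector_matrix_mult_def matrix_vector_mult_def sum_distrib_left
      sum_distrib_right mult.assoc) (rule sum.swap)

definition exchange_matrix :: "'a::semiring_1^2^2" where
  "exchange_matrix = vector [vector [0, 1], vector [1, 0]]"

lemma vector_exchange_matrix:
  "vector [a, b] v* exchange_matrix = (vector [b, a] :: 'a::semiring_1^2)"
  by (simp add: vec_eq_iff forall_2 vector_matrix_mult_def exchange_matrix_def sum_2)

lemma exchange_matrix_vector:
  "exchange_matrix *v vector [a, b] = (vector [b, a] :: 'a::semiring_1^2)"
  by (simp add: vec_eq_iff forall_2 matrix_vector_mult_def exchange_matrix_def sum_2)

lemma exchange_matrix_squared: "exchange_matrix ** exchange_matrix = (mat 1 :: 'a::semiring_1^2^2)"
  by (simp add: vec_eq_iff forall_2 matrix_matrix_mult_def exchange_matrix_def sum_2 mat_def)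

lemma centrosymmetric_commute_exchange_matrix:
  "vector [vector [a, b], vector [b, a]] ** exchange_matrix
     = exchange_matrix ** (vector [vector [a, b], vector [b, a]] :: 'a::semiring_1^2^2)"
  by (simp add: vec_eq_iff forall_2 matrix_matrix_mult_def exchange_matrix_def sum_2)

lemma sum_vector_matrix_mult_exchange:
  fixes N :: "'a::comm_semiring_1^2^2"
  assumes "N ** exchange_matrix = exchange_matrix ** N"
  shows "(\<Sum>i\<in>UNIV. ((x v* exchange_matrix) v* N) $ i * (exchange_matrix *v y) $ i)
       = (\<Sum>i\<in>UNIV. (x v* N) $ i * y $ i)"
proof -
  have "exchange_matrix ** N ** exchange_matrix = N"
    by (metis assms exchange_matrix_squared matrix_mul_assoc matrix_mul_lid)
  then have "((x v* exchange_matrix) v* N) v* exchange_matrix = x v* N"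
    by (simp add: vector_matrix_mul_assoc)
  then show ?thesis
    by (simp flip: sum_vector_matrix_mult_transpose)
qed

lemma BMC_schur_update:
  assumes "BMC f" and "ts \<in> {0..pi}" and "rs \<in> {0..1}"
    and "invertible (pivot_matrix f ts rs)"
  shows "BMC (schur_update f ts rs)"
proof -
  have sym: "f \<theta> \<rho> = f (\<theta> + pi) (-\<rho>)" if "\<theta> \<in> {-pi..0}" "\<rho> \<in> {-1..1}" for \<theta> \<rho>
    using assms(1) that by (simp add: BMC_iff)
  define row where "row \<rho> = (vector [f (ts - pi) \<rho>, f ts \<rho>] :: complex^2)" for \<rho>
  define col where "col \<theta> = (vector [f \<theta> rs, f \<theta> (-rs)] :: complex^2)" for \<theta>
  define N where "N = matrix_inv (pivot_matrix f ts rs)"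
  have row_reflect: "row (-\<rho>) = row \<rho> v* exchange_matrix" if "\<rho> \<in> {-1..1}" for \<rho>
    using sym[of "ts - pi" \<rho>] sym[of "ts - pi" "-\<rho>"] assms(2) that
    by (simp add: row_def vector_exchange_matrix)
  have col_reflect: "col (\<theta> + pi) = exchange_matrix *v col \<theta>" if "\<theta> \<in> {-pi..0}" for \<theta>
    using sym[of \<theta> rs] sym[of \<theta> "-rs"] assms(3) that
    by (simp add: col_def exchange_matrix_vector)
  have "pivot_matrix f ts rs = vector [row rs, row (-rs)]"
    by (simp add: pivot_matrix_def row_def)
  also have "\<dots> = vector [vector [f (ts - pi) rs, f ts rs], vector [f ts rs, f (ts - pi) rs]]"
    using row_reflect[of rs] assms(3) by (simp add: row_def vector_exchange_matrix)
  finally have "N ** exchange_matrix = exchange_matrix ** N"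
    unfolding N_def using assms(4)
    by (metis centrosymmetric_commute_exchange_matrix matrix_inv_commute)
  then have "schur_update f ts rs (\<theta> + pi) (-\<rho>) = schur_update f ts rs \<theta> \<rho>"
    if "\<theta> \<in> {-pi..0}" "\<rho> \<in> {-1..1}" for \<theta> \<rho>
    using that by (simp add: schur_update_def Let_def row_def[symmetric] col_def[symmetric]
        N_def[symmetric] row_reflect col_reflect sum_vector_matrix_mult_exchange)
  then show ?thesis
    by (simp add: BMC_iff)
qed

theorem lemma3p1:
  fixes f :: "real \<Rightarrow> real \<Rightarrow> complex" and ts rs :: real
  assumes "BMC f"
    and "ts \<in> {0..pi}" and "rs \<in> {0..1}"
    and "invertible (pivot_matrix f ts rs)"
  shows "BMC (schur_update f ts rs)
       \<and> BMC (\<lambda>\<theta> \<rho>. f \<theta> \<rho> - schur_update f ts rs \<theta> \<rho>)"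
  using BMC_schur_update[OF assms] BMC_diff[OF assms(1)] by blast

end
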